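(* Let $G=(V,E)$ be a connected graph on $n$ vertices with minimum degree $\delta(G)\geq 3$. Then $F(G)\geq \lfloor n/2\rfloor$. Moreover, if $G$ contains a cycle of even length, then $F(G)\geq \lceil n/2\rceil$.
   Context: All graphs are finite and simple. Given a graph $G=(V,E)$ and a set $S\subseteq V$ of filled vertices, the color change rule is: if a filled vertex $v$ has exactly one unfilled neighbor $w$, then $w$ becomes filled. The derived set of $S$ is the set of filled vertices obtained after applying the rule until no further application is possible. $S$ is a zero forcing set if its derived set is $V$; otherwise $S$ is a failed zero forcing set. The failed zero forcing number $F(G)$ is the maximum size of a failed zero forcing set of $G$. *)

theory Defs
  imports Main
begin

definition simple_graph :: "'a set \<Rightarrow> ('a \<Rightarrow> 'a \<Rightarrow> bool) \<Rightarrow> bool" where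
  "simple_graph V E \<longleftrightarrow> finite V \<and> (\<forall>u v. E u v \<longrightarrow> u \<in> V \<and> v \<in> V)
     \<and> (\<forall>u v. E u v \<longrightarrow> E v u) \<and> (\<forall>v. \<not> E v v)"

definition neighbors :: "'a set \<Rightarrow> ('a \<Rightarrow> 'a \<Rightarrow> bool) \<Rightarrow> 'a \<Rightarrow> 'a set" where
  "neighbors V E v = {u \<in> V. E v u}"

definition degree :: "'a set \<Rightarrow> ('a \<Rightarrow> 'a \<Rightarrow> bool) \<Rightarrow> 'a \<Rightarrow> nat" where
  "degree V E v = card (neighbors V E v)"

definition connected_graph :: "'a set \<Rightarrow> ('a \<Rightarrow> 'a \<Rightarrow> bool) \<Rightarrow> bool" where
  "connected_graph V E \<longleftrightarrow> V \<noteq> {} \<and> (\<forall>u\<in>V. \<forall>v\<in>V. E\<^sup>*\<^sup>* u v)"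

inductive_set derived_set :: "'a set \<Rightarrow> ('a \<Rightarrow> 'a \<Rightarrow> bool) \<Rightarrow> 'a set \<Rightarrow> 'a set"
  for V :: "'a set" and E :: "'a \<Rightarrow> 'a \<Rightarrow> bool" and S :: "'a set" where
  init: "v \<in> S \<Longrightarrow> v \<in> derived_set V E S"
| force: "\<lbrakk>u \<in> derived_set V E S; w \<in> neighbors V E u;
           \<forall>x \<in> neighbors V E u - {w}. x \<in> derived_set V E S\<rbrakk>
          \<Longrightarrow> w \<in> derived_set V E S"

definition zero_forcing_set :: "'a set \<Rightarrow> ('a \<Rightarrow> 'a \<Rightarrow> bool) \<Rightarrow> 'a set \<Rightarrow> bool" where
  "zero_forcing_set V E S \<longleftrightarrow> S \<subseteq> V \<and> derived_set V E S = V"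

definition failed_zero_forcing_set :: "'a set \<Rightarrow> ('a \<Rightarrow> 'a \<Rightarrow> bool) \<Rightarrow> 'a set \<Rightarrow> bool" where
  "failed_zero_forcing_set V E S \<longleftrightarrow> S \<subseteq> V \<and> derived_set V E S \<noteq> V"

definition failed_zf_number :: "'a set \<Rightarrow> ('a \<Rightarrow> 'a \<Rightarrow> bool) \<Rightarrow> nat" where
  "failed_zf_number V E = Max (card ` {S. failed_zero_forcing_set V E S})"

definition has_cycle_of_length :: "'a set \<Rightarrow> ('a \<Rightarrow> 'a \<Rightarrow> bool) \<Rightarrow> nat \<Rightarrow> bool" where
  "has_cycle_of_length V E k \<longleftrightarrow> k \<ge> 3 \<and> (\<exists>xs. length xs = k \<and> distinct xs \<and> set xs \<subseteq> V
      \<and> (\<forall>i<k. E (xs ! i) (xs ! ((i + 1) mod k))))"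

end

theory Submission
  imports Defs
begin

text \<open>Take a maximum cut \<open>(A, V - A)\<close>. Moving a single vertex to the other side cannot enlarge
  the cut, so every vertex has at least half of its neighbours, hence at least 2 of them, on the
  other side. Then no vertex of either side can ever force, so both \<open>A\<close> and \<open>V - A\<close> are failed
  zero forcing sets, and the larger one has at least \<open>\<lceil>n/2\<rceil>\<close> vertices.\<close>

lemma derived_set_eq_if_two_outside:
  assumes "\<forall>u\<in>S. card (neighbors V E u - S) \<ge> 2"
  shows "derived_set V E S = S"
proof
  show "derived_set V E S \<subseteq> S"
  proof
    fix x assume "x \<in> derived_set V E S"
    then show "x \<in> S"
    proof (induction rule: derived_set.induct)
      case (force u w)
      show ?case
      proof (rule ccontr)
        assume "w \<notin> S"
        have "\<not> neighbors V E u - S \<subseteq> {w}"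
        proof
          assume "neighbors V E u - S \<subseteq> {w}"
          then have "card (neighbors V E u - S) \<le> 1"
            using card_mono[of "{w}"] by fastforce
          with assms force.IH(1) show False by fastforce
        qed
        then show False using force.IH(2) by blast
      qed
    qed
  qed
qed (auto intro: derived_set.init)

lemma card_le_failed_zf_number:
  assumes "failed_zero_forcing_set V E S" and "finite V"
  shows "card S \<le> failed_zf_number V E"
proof -
  have "{S. failed_zero_forcing_set V E S} \<subseteq> Pow V"
    unfolding failed_zero_forcing_set_def by blast
  then have "finite {S. failed_zero_forcing_set V E S}"
    using assms(2) finite_subset by blast
  then show ?thesis
    unfolding failed_zf_number_def using assms(1) by (intro Max_ge) auto
qed

definition cross_neighbors :: "'a set \<Rightarrow> ('a \<Rightarrow> 'a \<Rightarrow> bool) \<Rightarrow> 'a set \<Rightarrow> 'a \<Rightarrow> 'a set" where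
  "cross_neighbors V E X v = {w \<in> neighbors V E v. (w \<in> X) \<noteq> (v \<in> X)}"

text \<open>Cut edges are counted as ordered pairs, so every undirected edge across the cut counts twice.\<close>
definition cut_edges :: "'a set \<Rightarrow> ('a \<Rightarrow> 'a \<Rightarrow> bool) \<Rightarrow> 'a set \<Rightarrow> ('a \<times> 'a) set" where
  "cut_edges V E X = {(u, w). u \<in> V \<and> w \<in> V \<and> E u w \<and> (u \<in> X) \<noteq> (w \<in> X)}"

lemma cross_neighbors_Diff:
  "cross_neighbors V E (V - X) v = cross_neighbors V E X v" if "v \<in> V"
  using that unfolding cross_neighbors_def neighbors_def by auto

lemma card_cut_edges_split:
  assumes sg: "simple_graph V E" and v: "v \<in> V"
  shows "card (cut_edges V E X) =
    card {p \<in> cut_edges V E X. fst p \<noteq> v \<and> snd p \<noteq> v} + 2 * card (cross_neighbors V E X v)"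
proof -
  let ?Q = "{p \<in> cut_edges V E X. fst p \<noteq> v \<and> snd p \<noteq> v}"
  let ?N = "cross_neighbors V E X v"
  let ?out = "(\<lambda>w. (v, w)) ` ?N" and ?in = "(\<lambda>w. (w, v)) ` ?N"
  have fin: "finite V" using sg unfolding simple_graph_def by blast
  have "finite (cut_edges V E X)"
    by (rule finite_subset[of _ "V \<times> V"]) (auto simp: cut_edges_def fin)
  then have finQ: "finite ?Q" by auto
  have finN: "finite ?N" using fin unfolding cross_neighbors_def neighbors_def by auto
  have split: "cut_edges V E X = ?Q \<union> (?out \<union> ?in)"
    using sg v unfolding cut_edges_def cross_neighbors_def neighbors_def simple_graph_def by auto
  have "?out \<inter> ?in = {}"
    using sg unfolding cross_neighbors_def neighbors_def simple_graph_def by auto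
  moreover have "card ?out = card ?N" "card ?in = card ?N"
    by (auto intro: card_image simp: inj_on_def)
  ultimately have "card (?out \<union> ?in) = 2 * card ?N"
    using finN by (simp add: card_Un_disjoint)
  moreover have "card (cut_edges V E X) = card ?Q + card (?out \<union> ?in)"
    by (subst split, rule card_Un_disjoint) (use finQ finN in auto)
  ultimately show ?thesis by simp
qed

lemma degree_eq_card_cross_neighbors:
  assumes "finite V"
  shows "degree V E v =
    card (cross_neighbors V E X v) + card {w \<in> neighbors V E v. (w \<in> X) = (v \<in> X)}"
proof -
  have "neighbors V E v = cross_neighbors V E X v \<union> {w \<in> neighbors V E v. (w \<in> X) = (v \<in> X)}"
    "cross_neighbors V E X v \<inter> {w \<in> neighbors V E v. (w \<in> X) = (v \<in> X)} = {}"
    unfolding cross_neighbors_def by auto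
  moreover have "finite (neighbors V E v)" using assms unfolding neighbors_def by auto
  ultimately show ?thesis unfolding degree_def by (metis card_Un_disjoint finite_Un)
qed

lemma max_cut_cross_neighbors:
  assumes sg: "simple_graph V E"
  obtains A where "A \<subseteq> V" "\<forall>v\<in>V. degree V E v \<le> 2 * card (cross_neighbors V E A v)"
proof -
  have fin: "finite V" using sg unfolding simple_graph_def by blast
  let ?cut = "\<lambda>X. card (cut_edges V E X)"
  obtain A where A: "A \<subseteq> V" and max: "\<And>B. B \<subseteq> V \<Longrightarrow> ?cut B \<le> ?cut A"
  proof -
    have fin_cuts: "finite (?cut ` Pow V)" using fin by auto
    then have "Max (?cut ` Pow V) \<in> ?cut ` Pow V" by (intro Max_in) auto
    then obtain A where "A \<subseteq> V" "?cut A = Max (?cut ` Pow V)" by auto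
    moreover have "\<And>B. B \<subseteq> V \<Longrightarrow> ?cut B \<le> Max (?cut ` Pow V)"
      using fin_cuts by (intro Max_ge) auto
    ultimately show ?thesis using that by simp
  qed
  show ?thesis
  proof (rule that[OF A], intro ballI)
    fix v assume v: "v \<in> V"
    define A' where "A' = (if v \<in> A then A - {v} else insert v A)"
    have vn: "v \<notin> neighbors V E v" using sg unfolding simple_graph_def neighbors_def by auto
    have flip: "cross_neighbors V E A' v = {w \<in> neighbors V E v. (w \<in> A) = (v \<in> A)}"
      using vn unfolding A'_def cross_neighbors_def by auto
    have same_rest: "{p \<in> cut_edges V E A'. fst p \<noteq> v \<and> snd p \<noteq> v}
        = {p \<in> cut_edges V E A. fst p \<noteq> v \<and> snd p \<noteq> v}"
      unfolding cut_edges_def A'_def by auto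
    have "A' \<subseteq> V" using A v unfolding A'_def by auto
    then have "?cut A' \<le> ?cut A" by (rule max)
    then have "card {w \<in> neighbors V E v. (w \<in> A) = (v \<in> A)} \<le> card (cross_neighbors V E A v)"
      using card_cut_edges_split[OF sg v, of A] card_cut_edges_split[OF sg v, of A'] same_rest flip
      by simp
    then show "degree V E v \<le> 2 * card (cross_neighbors V E A v)"
      using degree_eq_card_cross_neighbors[OF fin, where v = v and X = A] by simp
  qed
qed

lemma failed_zero_forcing_set_if_two_cross_neighbors:
  assumes "X \<subseteq> V" "X \<noteq> V" "\<forall>v\<in>V. card (cross_neighbors V E X v) \<ge> 2"
  shows "failed_zero_forcing_set V E X"
proof -
  have "\<forall>u\<in>X. cross_neighbors V E X u = neighbors V E u - X"
    unfolding cross_neighbors_def by auto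
  then have "derived_set V E X = X"
    using assms by (intro derived_set_eq_if_two_outside) (metis subsetD)
  then show ?thesis using assms unfolding failed_zero_forcing_set_def by auto
qed

theorem theorem1:
  fixes V :: "'a set" and E :: "'a \<Rightarrow> 'a \<Rightarrow> bool"
  assumes "simple_graph V E"
    and "connected_graph V E"
    and "\<forall>v\<in>V. degree V E v \<ge> 3"
  shows "failed_zf_number V E \<ge> card V div 2 \<and>
         ((\<exists>k. even k \<and> has_cycle_of_length V E k) \<longrightarrow> failed_zf_number V E \<ge> (card V + 1) div 2)"
proof -
  have fin: "finite V" using assms(1) unfolding simple_graph_def by blast
  obtain A where A: "A \<subseteq> V" and half: "\<forall>v\<in>V. degree V E v \<le> 2 * card (cross_neighbors V E A v)"
    using max_cut_cross_neighbors[OF assms(1)] by blast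
  have two: "\<forall>v\<in>V. card (cross_neighbors V E A v) \<ge> 2" and
    two': "\<forall>v\<in>V. card (cross_neighbors V E (V - A) v) \<ge> 2"
    using half assms(3) by (fastforce simp: cross_neighbors_Diff)+
  obtain v where v: "v \<in> V" using assms(2) unfolding connected_graph_def by blast
  then obtain w where "w \<in> cross_neighbors V E A v"
    using two by (metis card.empty ex_in_conv not_numeral_le_zero)
  then have "A \<noteq> V" "V - A \<noteq> V"
    using v unfolding cross_neighbors_def neighbors_def by auto
  then have "failed_zero_forcing_set V E A" "failed_zero_forcing_set V E (V - A)"
    using A two two' by (auto intro: failed_zero_forcing_set_if_two_cross_neighbors)
  then have "card A \<le> failed_zf_number V E" "card (V - A) \<le> failed_zf_number V E"
    using fin by (auto intro: card_le_failed_zf_number)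
  moreover have "card A + card (V - A) = card V"
    using A fin by (metis card_Diff_subset card_mono finite_subset le_add_diff_inverse)
  ultimately have "failed_zf_number V E \<ge> (card V + 1) div 2" by linarith
  then show ?thesis by auto
qed

end
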